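(* Let $\mathcal{D}(\rho)=(1-p)\rho+pX\rho X$ be a bit-flip channel and $\mathcal{E}(\rho)=(1-q)\rho+qZ\rho Z$ a phase-flip channel, $p,q\in[0,1]$. The entanglement-assisted classical communication capacity over a quantum trajectory is $$C_{\text{E,Q}}=2+H(\alpha)+(1-p)(1-q)\log_2[(1-p)(1-q)]+p(1-q)\log_2[p(1-q)]+(1-p)q\log_2[(1-p)q]+pq\log_2(pq),$$ where $\alpha=1-pq$ and $H(\alpha)=-\alpha\log_2\alpha-(1-\alpha)\log_2(1-\alpha)$.
   Context: $X,Y,Z$ are Pauli matrices, $\sigma_0=I,\sigma_1=X,\sigma_2=Y,\sigma_3=Z$, $|\pm\rangle=(|0\rangle\pm|1\rangle)/\sqrt2$, $0\log_2 0=0$. For a Pauli channel $\mathcal{N}(\rho)=\sum_i r_i\sigma_i\rho\sigma_i$, the entanglement-assisted classical capacity (superdense coding, pre-shared EPR pair, equiprobable inputs) is $C_E(\mathcal{N})=2+\sum_i r_i\log_2 r_i$. Quantum trajectory: given Kraus operators $\{D_i\}$ of $\mathcal{D}$ and $\{E_j\}$ of $\mathcal{E}$ (here multiples of Pauli matrices), the switched channel on data $\rho$ and control $\omega=|+\rangle\langle+|$ is $\sum_{i,j}W_{i,j}(\rho\otimes\omega)W_{i,j}^\dagger$ with $W_{i,j}=E_jD_i\otimes|0\rangle\langle0|+D_iE_j\otimes|1\rangle\langle1|$. Its output has the form $p_+\mathcal{S}_+(\rho)\otimes|+\rangle\langle+|+p_-\mathcal{S}_-(\rho)\otimes|-\rangle\langle-|$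 (commuting Kraus pairs go to the $|+\rangle$ branch, anticommuting pairs to the $|-\rangle$ branch), with $\mathcal{S}_\pm$ normalized Pauli channels; the capacity is defined as $C_{\text{E,Q}}=p_+C_E(\mathcal{S}_+)+p_-C_E(\mathcal{S}_-)$. *)

theory Defs
  imports Complex_Main "Jordan_Normal_Form.Matrix"
begin

fun pauli :: "nat \<Rightarrow> complex mat" where
  "pauli 0 = mat_of_rows_list 2 [[1, 0], [0, 1]]"
| "pauli (Suc 0) = mat_of_rows_list 2 [[0, 1], [1, 0]]"
| "pauli (Suc (Suc 0)) = mat_of_rows_list 2 [[0, - \<i>], [\<i>, 0]]"
| "pauli _ = mat_of_rows_list 2 [[1, 0], [0, -1]]"

definition mat_trace2 :: "complex mat \<Rightarrow> complex" where
  "mat_trace2 K = K $$ (0,0) + K $$ (1,1)"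

definition bitflip_kraus :: "real \<Rightarrow> complex mat list" where
  "bitflip_kraus p = [complex_of_real (sqrt (1 - p)) \<cdot>\<^sub>m pauli 0,
                      complex_of_real (sqrt p) \<cdot>\<^sub>m pauli 1]"

definition phaseflip_kraus :: "real \<Rightarrow> complex mat list" where
  "phaseflip_kraus q = [complex_of_real (sqrt (1 - q)) \<cdot>\<^sub>m pauli 0,
                        complex_of_real (sqrt q) \<cdot>\<^sub>m pauli 3]"

(* Data-space Kraus operators of the quantum trajectory, projected on control |+> (s = 1)
   or |-> (s = -1): with W_ij = E_j D_i (x) |0><0| + D_i E_j (x) |1><1| and control |+>,
   the |+-> component is (E_j D_i +- D_i E_j)/2 (times an overall 1/sqrt 2 * sqrt 2 = 1). *)
definition branch_kraus :: "complex \<Rightarrow> complex mat list \<Rightarrow> complex mat list \<Rightarrow> complex mat list" where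
  "branch_kraus s Ds Es = [(1/2) \<cdot>\<^sub>m (E * D + s \<cdot>\<^sub>m (D * E)). D \<leftarrow> Ds, E \<leftarrow> Es]"

definition pauli_coeff :: "nat \<Rightarrow> complex mat \<Rightarrow> complex" where
  "pauli_coeff c K = mat_trace2 (pauli c * K) / 2"

(* unnormalised weight of sigma_c rho sigma_c in the branch channel (Kraus ops are Pauli multiples) *)
definition branch_weight :: "complex mat list \<Rightarrow> nat \<Rightarrow> real" where
  "branch_weight Ks c = (\<Sum>K\<leftarrow>Ks. (cmod (pauli_coeff c K))\<^sup>2)"

definition branch_prob :: "complex mat list \<Rightarrow> real" where
  "branch_prob Ks = (\<Sum>c<4. branch_weight Ks c)"

definition plogp :: "real \<Rightarrow> real" where
  "plogp x = (if x = 0 then 0 else x * log 2 x)"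

(* entanglement-assisted capacity of the Pauli channel with probabilities r_0..r_3 *)
definition CE_pauli :: "(nat \<Rightarrow> real) \<Rightarrow> real" where
  "CE_pauli r = 2 + (\<Sum>i<4. plogp (r i))"

definition CEQ :: "complex mat list \<Rightarrow> complex mat list \<Rightarrow> real" where
  "CEQ Ds Es =
     (let Kp = branch_kraus 1 Ds Es; Km = branch_kraus (-1) Ds Es;
          pp = branch_prob Kp; pm = branch_prob Km
      in pp * CE_pauli (\<lambda>c. branch_weight Kp c / pp)
       + pm * CE_pauli (\<lambda>c. branch_weight Km c / pm))"

definition bin_entropy :: "real \<Rightarrow> real" where
  "bin_entropy a = - plogp a - plogp (1 - a)"

end

theory Submission
  imports Defs
begin

text \<open>Since the bit flip X and the phase flip Z anticommute, the trajectory sends the three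
  commuting Kraus pairs (I,I), (I,Z), (X,I) to the control state |+> and the single
  anticommuting pair (X,Z) to |->, where it acts as i Y. Hence p_+ = 1 - pq, p_- = pq,
  and the unnormalised Pauli weights of the two branches are the products of the weights of
  D and E. Writing p_+ C_E(S_+) + p_- C_E(S_-) in terms of unnormalised weights produces
  the entropy of the branch distribution (p_+, p_-) plus the sum of all plogp of the weights.\<close>

abbreviation mat2 :: "complex \<Rightarrow> complex \<Rightarrow> complex \<Rightarrow> complex \<Rightarrow> complex mat" where
  "mat2 a b c d \<equiv> mat_of_rows_list 2 [[a, b], [c, d]]"

lemma mat2_index:
  "i < 2 \<Longrightarrow> j < 2 \<Longrightarrow>
     mat2 a b c d $$ (i, j) = (if i = 0 then (if j = 0 then a else b) else (if j = 0 then c else d))"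
  by (auto simp: mat_of_rows_list_def less_2_cases_iff)

lemma mat2_dims [simp]: "dim_row (mat2 a b c d) = 2" "dim_col (mat2 a b c d) = 2"
  by (auto simp: mat_of_rows_list_def)

lemma mat2_mult [simp]:
  "mat2 a b c d * mat2 e f g h = mat2 (a*e + b*g) (a*f + b*h) (c*e + d*g) (c*f + d*h)"
proof -
  have sum_2: "(\<Sum>k = 0..<2. u k) = u 0 + u (1::nat)" for u :: "nat \<Rightarrow> complex"
    by (simp add: numeral_2_eq_2)
  show ?thesis
    by (rule eq_matI)
      (auto simp: mat2_index less_2_cases_iff scalar_prod_def row_def col_def sum_2)
qed

lemma mat2_smult [simp]: "x \<cdot>\<^sub>m mat2 a b c d = mat2 (x*a) (x*b) (x*c) (x*d)"
  by (rule eq_matI) (auto simp: mat2_index less_2_cases_iff)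

lemma mat2_add [simp]: "mat2 a b c d + mat2 e f g h = mat2 (a + e) (b + f) (c + g) (d + h)"
  by (rule eq_matI) (auto simp: mat2_index less_2_cases_iff)

lemma mat_trace2_mat2 [simp]: "mat_trace2 (mat2 a b c d) = a + d"
  by (simp add: mat_trace2_def mat2_index)

lemma pauli_mat2:
  "pauli 0 = mat2 1 0 0 1" "pauli 1 = mat2 0 1 1 0"
  "pauli 2 = mat2 0 (- \<i>) \<i> 0" "pauli 3 = mat2 1 0 0 (- 1)"
  by (simp_all add: numeral_eq_Suc)

lemma pauli_coeff_smult_pauli:
  assumes "c < 4" "k < 4"
  shows "pauli_coeff c (a \<cdot>\<^sub>m pauli k) = (if c = k then a else 0)"
proof -
  have "c \<in> {0, 1, 2, 3}" "k \<in> {0, 1, 2, 3}"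
    using assms by auto
  then show ?thesis
    by (auto simp: pauli_coeff_def pauli_mat2)
qed

lemma branch_weight_Nil: "branch_weight [] c = 0"
  by (simp add: branch_weight_def)

lemma branch_weight_Cons_smult_pauli:
  assumes "k < 4" "c < 4"
  shows "branch_weight (a \<cdot>\<^sub>m pauli k # Ks) c =
           (if k = c then (cmod a)\<^sup>2 else 0) + branch_weight Ks c"
  using assms by (simp add: branch_weight_def pauli_coeff_smult_pauli)

lemma branch_kraus_bitflip_phaseflip:
  "branch_kraus s (bitflip_kraus p) (phaseflip_kraus q) =
     [((1 + s) / 2 * sqrt ((1 - p) * (1 - q))) \<cdot>\<^sub>m pauli 0,
      ((1 + s) / 2 * sqrt ((1 - p) * q)) \<cdot>\<^sub>m pauli 3,
      ((1 + s) / 2 * sqrt (p * (1 - q))) \<cdot>\<^sub>m pauli 1,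
      ((1 - s) / 2 * \<i> * sqrt (p * q)) \<cdot>\<^sub>m pauli 2]"
  unfolding real_sqrt_mult of_real_mult
  by (simp add: branch_kraus_def bitflip_kraus_def phaseflip_kraus_def pauli_mat2 field_simps)

lemma bitflip_phaseflip_branch_weights:
  fixes p q :: real
  assumes "0 \<le> p" "p \<le> 1" "0 \<le> q" "q \<le> 1"
  defines "Kp \<equiv> branch_kraus 1 (bitflip_kraus p) (phaseflip_kraus q)"
    and "Km \<equiv> branch_kraus (- 1) (bitflip_kraus p) (phaseflip_kraus q)"
  shows "branch_weight Kp 0 = (1 - p) * (1 - q)" "branch_weight Kp 1 = p * (1 - q)"
    "branch_weight Kp 2 = 0" "branch_weight Kp 3 = (1 - p) * q"
    "branch_weight Km 0 = 0" "branch_weight Km 1 = 0"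
    "branch_weight Km 2 = p * q" "branch_weight Km 3 = 0"
  using assms
  by (simp_all add: branch_kraus_bitflip_phaseflip branch_weight_Cons_smult_pauli branch_weight_Nil
      norm_mult del: pauli.simps)

lemma sum_lessThan_4:
  fixes f :: "nat \<Rightarrow> 'a :: comm_monoid_add"
  shows "(\<Sum>c<4. f c) = f 0 + f 1 + f 2 + f 3"
  by (simp add: numeral_eq_Suc add.assoc)

lemma plogp_divide:
  assumes "x \<ge> 0" "P > 0"
  shows "P * plogp (x / P) = plogp x - x * log 2 P"
  using assms by (simp add: plogp_def log_divide algebra_simps)

lemma mult_CE_pauli_normalized:
  assumes w: "\<And>c. w c \<ge> 0" and P: "P = (\<Sum>c<4. w c)"
  shows "P * CE_pauli (\<lambda>c. w c / P) = 2 * P + (\<Sum>c<4. plogp (w c)) - plogp P"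
proof (cases "P = 0")
  case True
  then have "\<forall>c\<in>{..<4}. w c = 0"
    using P w by (simp add: sum_nonneg_eq_0_iff)
  then show ?thesis
    using True by (simp add: plogp_def)
next
  case False
  then have P_pos: "P > 0"
    using P w by (metis less_eq_real_def sum_nonneg)
  have "P * CE_pauli (\<lambda>c. w c / P) = 2 * P + (\<Sum>c<4. P * plogp (w c / P))"
    by (simp add: CE_pauli_def algebra_simps sum_distrib_left)
  also have "\<dots> = 2 * P + (\<Sum>c<4. plogp (w c) - w c * log 2 P)"
    using plogp_divide[OF w P_pos] by simp
  also have "\<dots> = 2 * P + (\<Sum>c<4. plogp (w c)) - P * log 2 P"
    by (simp add: sum_subtractf P sum_distrib_right)
  finally show ?thesis
    using P_pos by (simp add: plogp_def)
qed

lemma branch_weight_nonneg: "branch_weight Ks c \<ge> 0"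
  unfolding branch_weight_def by (rule sum_list_nonneg) auto

lemma CEQ_eq_entropy_plus_plogp_weights:
  fixes Ds Es :: "complex mat list"
  defines "Kp \<equiv> branch_kraus 1 Ds Es" and "Km \<equiv> branch_kraus (- 1) Ds Es"
  assumes "branch_prob Kp + branch_prob Km = 1"
  shows "CEQ Ds Es = 2 + bin_entropy (branch_prob Kp)
           + (\<Sum>c<4. plogp (branch_weight Kp c)) + (\<Sum>c<4. plogp (branch_weight Km c))"
proof -
  have "branch_prob K * CE_pauli (\<lambda>c. branch_weight K c / branch_prob K) =
          2 * branch_prob K + (\<Sum>c<4. plogp (branch_weight K c)) - plogp (branch_prob K)" for K
    by (rule mult_CE_pauli_normalized[OF branch_weight_nonneg branch_prob_def])
  moreover have "branch_prob Km = 1 - branch_prob Kp"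
    using assms(3) by simp
  ultimately show ?thesis
    by (simp add: CEQ_def Let_def bin_entropy_def flip: Kp_def Km_def)
qed

theorem corollary2:
  fixes p q :: real
  assumes "0 \<le> p" "p \<le> 1" "0 \<le> q" "q \<le> 1"
  shows "CEQ (bitflip_kraus p) (phaseflip_kraus q) =
           2 + bin_entropy (1 - p * q)
           + plogp ((1 - p) * (1 - q)) + plogp (p * (1 - q))
           + plogp ((1 - p) * q) + plogp (p * q)"
proof -
  note weights = bitflip_phaseflip_branch_weights[OF assms]
  let ?Kp = "branch_kraus 1 (bitflip_kraus p) (phaseflip_kraus q)"
  let ?Km = "branch_kraus (- 1) (bitflip_kraus p) (phaseflip_kraus q)"
  have prob_plus: "branch_prob ?Kp = 1 - p * q"
    unfolding branch_prob_def sum_lessThan_4 weights by (simp add: algebra_simps)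
  have prob_minus: "branch_prob ?Km = p * q"
    unfolding branch_prob_def sum_lessThan_4 weights by simp
  have plogp_plus: "(\<Sum>c<4. plogp (branch_weight ?Kp c)) =
      plogp ((1 - p) * (1 - q)) + plogp (p * (1 - q)) + plogp ((1 - p) * q)"
    unfolding sum_lessThan_4 weights by (simp add: plogp_def)
  have plogp_minus: "(\<Sum>c<4. plogp (branch_weight ?Km c)) = plogp (p * q)"
    unfolding sum_lessThan_4 weights by (simp add: plogp_def)
  show ?thesis
    using CEQ_eq_entropy_plus_plogp_weights[of "bitflip_kraus p" "phaseflip_kraus q"]
    unfolding prob_plus prob_minus plogp_plus plogp_minus by simp
qed

end
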